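(* Let $T\ge 1$ be an integer and $p^*\in(0,1]$. For integers $l\ge1$ and $0\le n\le l-1$ with $l-n\le T$ put $P^l_D(n)=\frac{\prod_{i=0}^{l-n-1}(1-\frac{i}{T})}{T^{n}}$. For $l\ge1$ let $n^*_l$ be the least $n\in\{0,\dots,l-1\}$ with $P^l_D(n)\le p^*$, if such $n$ exists (otherwise $n^*_l$ is undefined). Let $l_{max}$ be the least $l\in\{1,\dots,T\}$ with $P^l_D(0)\le p^*$, and assume $l_{max}\le \lfloor T-\sqrt{T}\rfloor+1$. Then for every $l$ with $2\le l\le l_{max}$ such that $n^*_{l-1}$ is defined, $n^*_l$ is defined and $n^*_{l-1}\le n^*_l+1$.
   Context: $p^*$ is the threshold probability for a random device to share a given device ID. *)

theory Defs
  imports Complex_Main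
begin

definition PD :: "nat \<Rightarrow> nat \<Rightarrow> nat \<Rightarrow> real" where
  "PD T l n = (\<Prod>i<l - n. 1 - real i / real T) / real T ^ n"

text \<open>Candidates for n*_l: n in {0..l-1} where P^l_D(n) is defined (l - n \<le> T) and \<le> p*.
  n*_l is defined iff this set is nonempty, and then it is its least element.\<close>
definition nstar_set :: "nat \<Rightarrow> real \<Rightarrow> nat \<Rightarrow> nat set" where
  "nstar_set T p l = {n. n \<le> l - 1 \<and> l - n \<le> T \<and> PD T l n \<le> p}"

definition nstar :: "nat \<Rightarrow> real \<Rightarrow> nat \<Rightarrow> nat" where
  "nstar T p l = (LEAST n. n \<in> nstar_set T p l)"

end

theory Submission
  imports Defs
begin

text \<open>
  Since P^{l+1}_D(n + 1) = P^l_D(n) / T, a candidate m for n*_{l-1} yields the candidate m + 1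
  for n*_l. Conversely, let n = n*_l and k = l - n - 2 (the case l \<le> n + 2 is trivial). Then
  P^{l-1}_D(n + 1) = P^l_D(n) / (T (1 - k/T) (1 - (k + 1)/T)), and the denominator is at
  least 1 as soon as k + 1 \<le> T - sqrt T, which the bound on lmax guarantees; so n + 1 is a
  candidate for n*_{l-1}.
\<close>

lemma PD_Suc_Suc: "PD T (Suc l) (Suc n) = PD T l n / real T"
  unfolding PD_def by simp

lemma PD_nonneg: "l - n \<le> T \<Longrightarrow> 0 \<le> PD T l n"
  unfolding PD_def by (intro divide_nonneg_nonneg prod_nonneg) (auto simp: divide_le_eq_1)

lemma PD_add_2:
  assumes "T > 0"
  shows "PD T (n + k + 2) n =
     PD T (n + k + 1) (n + 1) * ((1 - real k / real T) * (1 - real (Suc k) / real T) * real T)"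
proof -
  have "n + k + 2 - n = Suc (Suc k)" "n + k + 1 - (n + 1) = k" by simp_all
  then show ?thesis
    using assms unfolding PD_def by (simp add: field_simps)
qed

lemma one_le_consecutive_factors:
  fixes T k :: nat
  assumes gap: "sqrt (real T) + real (Suc k) \<le> real T"
  shows "1 \<le> (1 - real k / real T) * (1 - real (Suc k) / real T) * real T"
proof -
  define s where "s = sqrt (real T)"
  have s_nonneg: "s \<ge> 0" and s_sq: "s * s = real T"
    unfolding s_def by simp_all
  have T_pos: "real T > 0"
    using gap s_nonneg unfolding s_def by linarith
  have "s + 1 \<le> real T - real k" and "s \<le> real T - real (Suc k)"
    using gap unfolding s_def by simp_all
  then have "(s + 1) * s \<le> (real T - real k) * (real T - real (Suc k))"
    using s_nonneg by (intro mult_mono) auto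
  then have "real T \<le> (real T - real k) * (real T - real (Suc k))"
    using s_sq s_nonneg by (simp add: algebra_simps)
  also have "\<dots> = (1 - real k / real T) * (1 - real (Suc k) / real T) * real T * real T"
    using T_pos by (simp add: field_simps)
  finally show ?thesis
    using T_pos by (simp add: mult.assoc)
qed

lemma PD_shift_le:
  assumes gap: "sqrt (real T) + real (Suc k) \<le> real T"
  shows "PD T (n + k + 1) (n + 1) \<le> PD T (n + k + 2) n"
proof -
  have "k \<le> T" and T_pos: "T > 0"
    using gap real_sqrt_ge_zero[of "real T"] by linarith+
  then have "PD T (n + k + 1) (n + 1) \<ge> 0"
    by (intro PD_nonneg) simp
  then have "PD T (n + k + 1) (n + 1)
      \<le> PD T (n + k + 1) (n + 1) * ((1 - real k / real T) * (1 - real (Suc k) / real T) * real T)"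
    using mult_left_mono[OF one_le_consecutive_factors[OF gap]] by simp
  then show ?thesis
    using PD_add_2[OF T_pos] by simp
qed

lemma nstar_mem: "nstar_set T p l \<noteq> {} \<Longrightarrow> nstar T p l \<in> nstar_set T p l"
  unfolding nstar_def by (auto intro: LeastI)

lemma nstar_le: "n \<in> nstar_set T p l \<Longrightarrow> nstar T p l \<le> n"
  unfolding nstar_def by (rule Least_le)

lemma Suc_mem_nstar_set_Suc:
  assumes "n \<in> nstar_set T p l" and "l \<ge> 1" and "T \<ge> 1" and "p \<ge> 0"
  shows "Suc n \<in> nstar_set T p (Suc l)"
proof -
  have "PD T l n / real T \<le> p / real T"
    using assms(1) unfolding nstar_set_def by (simp add: divide_right_mono)
  also have "\<dots> \<le> p"
    using assms(3,4) mult_left_mono[of 1 "real T" p] by (simp add: divide_le_eq)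
  finally show ?thesis
    using assms(1,2) unfolding nstar_set_def by (auto simp: PD_Suc_Suc)
qed

lemma Suc_mem_nstar_set_pred:
  assumes n: "n \<in> nstar_set T p l" and "n + 3 \<le> l"
    and gap: "sqrt (real T) + real (l - 1) \<le> real T"
  shows "Suc n \<in> nstar_set T p (l - 1)"
proof -
  define k where "k = l - n - 2"
  have l_eq: "l = n + k + 2" and "l - 1 = n + k + 1"
    using \<open>n + 3 \<le> l\<close> unfolding k_def by auto
  have "sqrt (real T) + real (Suc k) \<le> real T"
    using gap l_eq by simp
  then have "PD T (l - 1) (n + 1) \<le> PD T l n"
    using PD_shift_le \<open>l - 1 = n + k + 1\<close> l_eq by metis
  then show ?thesis
    using n \<open>n + 3 \<le> l\<close> unfolding nstar_set_def by auto
qed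

theorem corollary1:
  fixes T lmax :: nat and p :: real
  assumes "T \<ge> 1"
    and "0 < p" and "p \<le> 1"
    and "1 \<le> lmax" and "lmax \<le> T" and "PD T lmax 0 \<le> p"
    and "\<forall>l. 1 \<le> l \<and> l < lmax \<longrightarrow> PD T l 0 > p"
    and "real lmax \<le> real_of_int \<lfloor>real T - sqrt (real T)\<rfloor> + 1"
  shows "\<forall>l. 2 \<le> l \<and> l \<le> lmax \<and> nstar_set T p (l - 1) \<noteq> {} \<longrightarrow>
           nstar_set T p l \<noteq> {} \<and> nstar T p (l - 1) \<le> nstar T p l + 1"
proof (intro allI impI)
  fix l assume l: "2 \<le> l \<and> l \<le> lmax \<and> nstar_set T p (l - 1) \<noteq> {}"
  have gap: "sqrt (real T) + real (l - 1) \<le> real T"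
    using assms(8) l of_int_floor_le[of "real T - sqrt (real T)"] by linarith
  define m where "m = nstar T p (l - 1)"
  have m: "m \<in> nstar_set T p (l - 1)"
    using l nstar_mem unfolding m_def by blast
  then have "Suc m \<in> nstar_set T p (Suc (l - 1))"
    using assms(1,2) l by (intro Suc_mem_nstar_set_Suc) auto
  then have "Suc m \<in> nstar_set T p l"
    using l by simp
  then have nonempty: "nstar_set T p l \<noteq> {}" by blast
  define n where "n = nstar T p l"
  have n: "n \<in> nstar_set T p l"
    using nstar_mem[OF nonempty] unfolding n_def .
  have "m \<le> n + 1"
  proof (cases "n + 3 \<le> l")
    case True
    then show ?thesis
      using Suc_mem_nstar_set_pred[OF n True gap] nstar_le unfolding m_def by fastforce
  next
    case False
    then show ?thesis
      using m unfolding nstar_set_def by auto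
  qed
  with nonempty show "nstar_set T p l \<noteq> {} \<and> nstar T p (l - 1) \<le> nstar T p l + 1"
    unfolding m_def n_def by blast
qed

end
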